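(* Let $X$ be a non-negative random variable with finite mean $\mu>0$. For any integer $m\geqslant 2$ there exist constants $r_m,s_m>0$ such that \[ IG_{m;\min}(X)=G(X+r_m),\qquad IG_{m;\max}(X)=G(X+s_m), \] where for a non-negative random variable $Y$ with mean $\mu_Y>0$, $G(Y)=\dfrac{\mathbb{E}|Y_1-Y_2|}{2\mu_Y}$ is the classical Gini coefficient, $Y_1,Y_2$ being i.i.d. copies of $Y$.
   Context: For an integer $m\geqslant 2$ and i.i.d. copies $X_1,\ldots,X_m$ of $X$, the extended lower Gini index is $IG_{m;\min}(X)=\dfrac{\mathbb{E}[X_1-\min\{X_1,\ldots,X_m\}]}{m\mu}$ and the extended upper Gini index is $IG_{m;\max}(X)=\dfrac{\mathbb{E}[\max\{X_1,\ldots,X_m\}-X_1]}{m\mu}$. *)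

theory Defs
  imports "HOL-Probability.Probability"
begin

text \<open>All quantities below depend only on the law \<open>N\<close> (a probability measure on the
reals) of the random variable; i.i.d. copies are realised on the product measure.\<close>

definition mean :: "real measure \<Rightarrow> real" where
  "mean N = (\<integral>x. x \<partial>N)"

definition gini :: "real measure \<Rightarrow> real" where
  "gini N = (\<integral>y. \<bar>fst y - snd y\<bar> \<partial>(N \<Otimes>\<^sub>M N)) / (2 * mean N)"

definition IG_min :: "nat \<Rightarrow> real measure \<Rightarrow> real" where
  "IG_min m N =
     (\<integral>x. (x 0 - Min (x ` {..<m})) \<partial>(PiM {..<m} (\<lambda>_. N))) / (real m * mean N)"

definition IG_max :: "nat \<Rightarrow> real measure \<Rightarrow> real" where
  "IG_max m N =
     (\<integral>x. (Max (x ` {..<m}) - x 0) \<partial>(PiM {..<m} (\<lambda>_. N))) / (real m * mean N)"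

end

theory Submission
  imports Defs
begin

text \<open>Let \<open>D = E|X\<^sub>1 - X\<^sub>2|\<close>, so that \<open>G(X + c) = D / (2(\<mu> + c))\<close>, and note
\<open>E (X\<^sub>i - X\<^sub>j)\<^sup>+ = D / 2\<close> for \<open>i \<noteq> j\<close>. Pointwise
\<open>(X\<^sub>1 - X\<^sub>2)\<^sup>+ \<le> X\<^sub>1 - min X\<^sub>k \<le> \<Sum>\<^bsub>j \<noteq> 1\<^esub> (X\<^sub>1 - X\<^sub>j)\<^sup>+\<close>, hence
\<open>A = E[X\<^sub>1 - min X\<^sub>k]\<close> lies in \<open>[D/2, (m - 1) D/2]\<close>, and likewise for the maximum.
Solving \<open>A / (m\<mu>) = D / (2(\<mu> + r))\<close> gives \<open>\<mu> + r = m\<mu>D / (2A)\<close>, which exceeds \<open>\<mu>\<close>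
precisely because \<open>2A \<le> (m - 1) D < m D\<close>; if \<open>D = 0\<close> then \<open>A = 0\<close> and any \<open>r\<close> works.\<close>

lemma indep_vars_PiM_components:
  assumes M: "\<And>i. i \<in> I \<Longrightarrow> prob_space (M i)"
  shows "prob_space.indep_vars (PiM I M) M (\<lambda>i x. x i) I"
proof -
  interpret prob_space "PiM I M" by (rule prob_space_PiM[OF M])
  show ?thesis
  proof (cases "I = {}")
    case True
    show ?thesis
      unfolding indep_vars_def indep_sets_def using True by simp
  next
    case False
    have "distr (PiM I M) (PiM I M) (\<lambda>x. restrict x I) = PiM I M"
      using distr_PiM_reindex[of I M id I] M by simp
    also have "\<dots> = PiM I (\<lambda>i. distr (PiM I M) (M i) (\<lambda>x. x i))"
      by (rule PiM_cong) (simp_all add: distr_PiM_component M)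
    finally show ?thesis
      using False by (subst indep_vars_iff_distr_eq_PiM') auto
  qed
qed

lemma distr_PiM_pair_components:
  assumes M: "\<And>i. i \<in> I \<Longrightarrow> prob_space (M i)" and ij: "i \<in> I" "j \<in> I" "i \<noteq> j"
  shows "distr (PiM I M) (M i \<Otimes>\<^sub>M M j) (\<lambda>x. (x i, x j)) = M i \<Otimes>\<^sub>M M j"
proof -
  interpret prob_space "PiM I M" by (rule prob_space_PiM[OF M])
  have "indep_var (PiM {i} M) (\<lambda>x. restrict x {i}) (PiM {j} M) (\<lambda>x. restrict x {j})"
    using indep_var_restrict[OF indep_vars_PiM_components[OF M], of "{i}" "{j}"] ij by simp
  then have "indep_var (M i) ((\<lambda>f. f i) \<circ> (\<lambda>x. restrict x {i})) (M j) ((\<lambda>f. f j) \<circ> (\<lambda>x. restrict x {j}))"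
    by (rule indep_var_compose) auto
  then have "indep_var (M i) (\<lambda>x. x i) (M j) (\<lambda>x. x j)"
    by (simp add: comp_def)
  then show ?thesis
    using ij by (simp add: indep_var_distribution_eq distr_PiM_component M)
qed

lemma integral_PiM_component:
  fixes f :: "'a \<Rightarrow> 'b::{banach, second_countable_topology}"
  assumes M: "\<And>i. i \<in> I \<Longrightarrow> prob_space (M i)" and i: "i \<in> I"
    and f: "f \<in> borel_measurable (M i)"
  shows "(\<integral>x. f (x i) \<partial>PiM I M) = (\<integral>y. f y \<partial>M i)"
    and "integrable (PiM I M) (\<lambda>x. f (x i)) \<longleftrightarrow> integrable (M i) f"
  using integral_distr[of "\<lambda>x. x i" "PiM I M" "M i" f] integrable_distr_eq[of "\<lambda>x. x i" "PiM I M" "M i" f]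
    i f by (simp_all add: distr_PiM_component M)

lemma integral_PiM_pair_components:
  fixes f :: "'a \<times> 'a \<Rightarrow> 'b::{banach, second_countable_topology}"
  assumes M: "\<And>i. i \<in> I \<Longrightarrow> prob_space (M i)" and ij: "i \<in> I" "j \<in> I" "i \<noteq> j"
    and f: "f \<in> borel_measurable (M i \<Otimes>\<^sub>M M j)"
  shows "(\<integral>x. f (x i, x j) \<partial>PiM I M) = (\<integral>y. f y \<partial>(M i \<Otimes>\<^sub>M M j))"
proof -
  have "(\<lambda>x. (x i, x j)) \<in> measurable (PiM I M) (M i \<Otimes>\<^sub>M M j)"
    using ij by simp
  \<comment> \<open>Without \<open>of I M\<close>, higher-order unification instantiates \<open>M\<close> with a reindexing of \<open>M\<close>.\<close>
  from integral_distr[OF this f] show ?thesis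
    by (simp add: distr_PiM_pair_components[of I M, OF M ij])
qed

definition gini_mean_difference :: "real measure \<Rightarrow> real" where
  "gini_mean_difference N = (\<integral>y. \<bar>fst y - snd y\<bar> \<partial>(N \<Otimes>\<^sub>M N))"

lemma gini_mean_difference_nonneg: "0 \<le> gini_mean_difference N"
  unfolding gini_mean_difference_def by (rule Bochner_Integration.integral_nonneg) simp

lemma integral_PiM_positive_gap:
  fixes N :: "real measure"
  assumes N: "prob_space N" and sets_N: "sets N = sets borel" and int_N: "integrable N (\<lambda>x. x)"
    and ij: "i \<in> I" "j \<in> I" "i \<noteq> j"
  shows "integrable (PiM I (\<lambda>_. N)) (\<lambda>x. max (x i - x j) 0)"
    and "(\<integral>x. max (x i - x j) 0 \<partial>PiM I (\<lambda>_. N)) = gini_mean_difference N / 2"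
proof -
  let ?M = "PiM I (\<lambda>_. N)"
  have [measurable_cong]: "sets N = sets borel" by (rule sets_N)
  have int_comp: "integrable ?M (\<lambda>x. x k)" "(\<integral>x. x k \<partial>?M) = (\<integral>x. x \<partial>N)" if "k \<in> I" for k
    using integral_PiM_component[of I "\<lambda>_. N" k "\<lambda>x. x"] N int_N that by simp_all
  have int_diff: "integrable ?M (\<lambda>x. x i - x j)" "(\<integral>x. x i - x j \<partial>?M) = 0"
    using int_comp ij by simp_all
  have int_abs: "(\<integral>x. \<bar>x i - x j\<bar> \<partial>?M) = gini_mean_difference N"
    unfolding gini_mean_difference_def
    using integral_PiM_pair_components[of I "\<lambda>_. N" i j "\<lambda>y. \<bar>fst y - snd y\<bar>"] N ij by simp
  have max_eq: "max (x i - x j) 0 = (\<bar>x i - x j\<bar> + (x i - x j)) / 2" for x :: "'a \<Rightarrow> real"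
    by (simp add: max_def)
  show "integrable ?M (\<lambda>x. max (x i - x j) 0)"
    unfolding max_eq using int_diff by auto
  show "(\<integral>x. max (x i - x j) 0 \<partial>?M) = gini_mean_difference N / 2"
    unfolding max_eq using int_diff int_abs by simp
qed

lemma Min_gap_bounds:
  fixes x :: "'i \<Rightarrow> 'a::linordered_ab_group_add"
  assumes A: "finite A" and ij: "i \<in> A" "j \<in> A"
  shows "max (x i - x j) 0 \<le> x i - Min (x ` A)"
    and "x i - Min (x ` A) \<le> (\<Sum>k\<in>A - {i}. max (x i - x k) 0)"
proof -
  show "max (x i - x j) 0 \<le> x i - Min (x ` A)"
    using A ij by (simp add: Min_le)
  have "Min (x ` A) \<in> x ` A"
    using A ij by (intro Min_in) auto
  then obtain k where k: "k \<in> A" "Min (x ` A) = x k"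
    by auto
  show "x i - Min (x ` A) \<le> (\<Sum>k\<in>A - {i}. max (x i - x k) 0)"
  proof (cases "k = i")
    case True
    then show ?thesis using k by (simp add: sum_nonneg)
  next
    case False
    then have "(\<Sum>k\<in>{k}. max (x i - x k) 0) \<le> (\<Sum>k\<in>A - {i}. max (x i - x k) 0)"
      using A k by (intro sum_mono2) auto
    then show ?thesis using k by simp
  qed
qed

lemma Max_gap_bounds:
  fixes x :: "'i \<Rightarrow> 'a::linordered_ab_group_add"
  assumes A: "finite A" and ij: "i \<in> A" "j \<in> A"
  shows "max (x j - x i) 0 \<le> Max (x ` A) - x i"
    and "Max (x ` A) - x i \<le> (\<Sum>k\<in>A - {i}. max (x k - x i) 0)"
proof -
  have "- Max (x ` A) = Min (uminus ` x ` A)"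
    using A ij by (intro minus_Max_eq_Min) auto
  then have "Min ((\<lambda>k. - x k) ` A) = - Max (x ` A)"
    by (simp add: image_image)
  then show "max (x j - x i) 0 \<le> Max (x ` A) - x i"
    and "Max (x ` A) - x i \<le> (\<Sum>k\<in>A - {i}. max (x k - x i) 0)"
    using Min_gap_bounds[of A i j "\<lambda>k. - x k"] A ij by simp_all
qed

lemma integral_between_positive_gaps:
  fixes N :: "real measure" and F :: "('i \<Rightarrow> real) \<Rightarrow> real"
  assumes N: "prob_space N" "sets N = sets borel" "integrable N (\<lambda>x. x)"
    and F: "F \<in> borel_measurable (PiM I (\<lambda>_. N))"
    and ij: "i \<in> I" "j \<in> I" "i \<noteq> j"
    and J: "finite J" "\<And>k. k \<in> J \<Longrightarrow> a k \<in> I \<and> b k \<in> I \<and> a k \<noteq> b k"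
    and lower: "\<And>x. max (x i - x j) 0 \<le> F x"
    and upper: "\<And>x. F x \<le> (\<Sum>k\<in>J. max (x (a k) - x (b k)) 0)"
  shows "integrable (PiM I (\<lambda>_. N)) F"
    and "gini_mean_difference N / 2 \<le> (\<integral>x. F x \<partial>PiM I (\<lambda>_. N))"
    and "(\<integral>x. F x \<partial>PiM I (\<lambda>_. N)) \<le> card J * (gini_mean_difference N / 2)"
proof -
  let ?M = "PiM I (\<lambda>_. N)"
  let ?U = "\<lambda>x. \<Sum>k\<in>J. max (x (a k) - x (b k)) 0"
  note gap = integral_PiM_positive_gap[OF N]
  have int_U: "integrable ?M ?U"
    by (intro Bochner_Integration.integrable_sum gap(1)) (auto dest: J(2))
  have "norm (F x) \<le> norm (?U x)" for x
    using lower[of x] upper[of x] by auto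
  then show int_F: "integrable ?M F"
    by (intro Bochner_Integration.integrable_bound[OF int_U F]) auto
  show "gini_mean_difference N / 2 \<le> (\<integral>x. F x \<partial>?M)"
    using integral_mono[OF gap(1)[OF ij] int_F lower] gap(2)[OF ij] by simp
  have "(\<integral>x. F x \<partial>?M) \<le> (\<integral>x. ?U x \<partial>?M)"
    by (rule integral_mono[OF int_F int_U upper])
  also have "\<dots> = (\<Sum>k\<in>J. \<integral>x. max (x (a k) - x (b k)) 0 \<partial>?M)"
    by (intro Bochner_Integration.integral_sum gap(1)) (auto dest: J(2))
  also have "\<dots> = (\<Sum>k\<in>J. gini_mean_difference N / 2)"
    by (intro sum.cong refl gap(2)) (auto dest: J(2))
  finally show "(\<integral>x. F x \<partial>?M) \<le> card J * (gini_mean_difference N / 2)"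
    by simp
qed

lemma exists_positive_shift:
  fixes A D \<mu> :: real
  assumes \<mu>: "0 < \<mu>" and D: "0 \<le> D"
    and lower: "D / 2 \<le> A" and upper: "A \<le> (real m - 1) * (D / 2)"
  shows "\<exists>r>0. A / (real m * \<mu>) = D / (2 * (\<mu> + r))"
proof (cases "D = 0")
  case True
  then show ?thesis
    using lower upper by (intro exI[of _ 1]) simp
next
  case False
  then have "0 < D" "0 < A"
    using D lower by auto
  moreover have "2 * A < real m * D"
    using upper \<open>0 < D\<close> by (simp add: algebra_simps)
  moreover from calculation have "0 < real m"
    by (intro zero_less_mult_pos2[of "real m" D]) auto
  ultimately show ?thesis
    using \<mu> by (intro exI[of _ "\<mu> * (real m * D - 2 * A) / (2 * A)"]) (auto simp: field_simps)
qed

lemma mean_distr_add: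
  fixes N :: "real measure"
  assumes N: "prob_space N" "sets N = sets borel" "integrable N (\<lambda>x. x)"
  shows "mean (distr N borel (\<lambda>x. x + c)) = mean N + c"
proof -
  interpret prob_space N by (rule N(1))
  have [measurable_cong]: "sets N = sets borel" by (rule N(2))
  have "mean (distr N borel (\<lambda>x. x + c)) = (\<integral>x. x + c \<partial>N)"
    unfolding mean_def by (rule integral_distr) simp_all
  then show ?thesis
    using N(3) by (simp add: mean_def prob_space)
qed

lemma gini_mean_difference_distr_add:
  fixes N :: "real measure"
  assumes N: "prob_space N" "sets N = sets borel"
  shows "gini_mean_difference (distr N borel (\<lambda>x. x + c)) = gini_mean_difference N"
proof -
  interpret prob_space N by (rule N(1))
  have [measurable_cong]: "sets N = sets borel" by (rule N(2))
  let ?shift = "\<lambda>x::real. x + c"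
  have shift: "?shift \<in> measurable N borel" by simp
  have "distr N borel ?shift \<Otimes>\<^sub>M distr N borel ?shift
      = distr (N \<Otimes>\<^sub>M N) (borel \<Otimes>\<^sub>M borel) (\<lambda>(x, y). (x + c, y + c))"
    using prob_space_distr[OF shift]
    by (intro pair_measure_distr shift) (simp add: prob_space_imp_sigma_finite)
  then show ?thesis
    unfolding gini_mean_difference_def by (simp add: integral_distr case_prod_beta)
qed

lemma gini_distr_add:
  fixes N :: "real measure"
  assumes N: "prob_space N" "sets N = sets borel" "integrable N (\<lambda>x. x)"
  shows "gini (distr N borel (\<lambda>x. x + c)) = gini_mean_difference N / (2 * (mean N + c))"
  using gini_mean_difference_distr_add[OF N(1,2)] mean_distr_add[OF N]
  by (simp add: gini_def gini_mean_difference_def)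

lemma exists_gini_shift_eq:
  fixes N :: "real measure"
  assumes N: "prob_space N" "sets N = sets borel" "integrable N (\<lambda>x. x)" and mean: "0 < mean N"
    and lower: "gini_mean_difference N / 2 \<le> A"
    and upper: "A \<le> (real m - 1) * (gini_mean_difference N / 2)"
  shows "\<exists>r>0. A / (real m * mean N) = gini (distr N borel (\<lambda>x. x + r))"
  using exists_positive_shift[OF mean gini_mean_difference_nonneg lower upper]
  by (simp add: gini_distr_add[OF N])

lemma PiM_component_borel_measurable:
  assumes "sets N = sets borel" "i \<in> I"
  shows "(\<lambda>x. x i) \<in> borel_measurable (PiM I (\<lambda>_. N))"
  using assms measurable_cong_sets by (metis measurable_component_singleton)

lemma integral_gap_to_Min_bounds:
  fixes N :: "real measure"
  assumes N: "prob_space N" "sets N = sets borel" "integrable N (\<lambda>x. x)" and m: "2 \<le> m"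
  shows "gini_mean_difference N / 2 \<le> (\<integral>x. x 0 - Min (x ` {..<m}) \<partial>PiM {..<m} (\<lambda>_. N))"
    and "(\<integral>x. x 0 - Min (x ` {..<m}) \<partial>PiM {..<m} (\<lambda>_. N)) \<le> (real m - 1) * (gini_mean_difference N / 2)"
proof -
  have "(\<lambda>x. x 0 - Min ((\<lambda>k. x k) ` {..<m})) \<in> borel_measurable (PiM {..<m} (\<lambda>_. N))"
    using m N(2) by (intro borel_measurable_diff borel_measurable_Min PiM_component_borel_measurable) auto
  from integral_between_positive_gaps[OF N this, of 0 1 "{..<m} - {0}" "\<lambda>_. 0" id]
  show "gini_mean_difference N / 2 \<le> (\<integral>x. x 0 - Min (x ` {..<m}) \<partial>PiM {..<m} (\<lambda>_. N))"
    and "(\<integral>x. x 0 - Min (x ` {..<m}) \<partial>PiM {..<m} (\<lambda>_. N)) \<le> (real m - 1) * (gini_mean_difference N / 2)"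
    using m Min_gap_bounds[of "{..<m}" 0 1] by (auto simp: of_nat_diff)
qed

lemma integral_gap_to_Max_bounds:
  fixes N :: "real measure"
  assumes N: "prob_space N" "sets N = sets borel" "integrable N (\<lambda>x. x)" and m: "2 \<le> m"
  shows "gini_mean_difference N / 2 \<le> (\<integral>x. Max (x ` {..<m}) - x 0 \<partial>PiM {..<m} (\<lambda>_. N))"
    and "(\<integral>x. Max (x ` {..<m}) - x 0 \<partial>PiM {..<m} (\<lambda>_. N)) \<le> (real m - 1) * (gini_mean_difference N / 2)"
proof -
  have "(\<lambda>x. Max ((\<lambda>k. x k) ` {..<m}) - x 0) \<in> borel_measurable (PiM {..<m} (\<lambda>_. N))"
    using m N(2) by (intro borel_measurable_diff borel_measurable_Max PiM_component_borel_measurable) auto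
  from integral_between_positive_gaps[OF N this, of 1 0 "{..<m} - {0}" id "\<lambda>_. 0"]
  show "gini_mean_difference N / 2 \<le> (\<integral>x. Max (x ` {..<m}) - x 0 \<partial>PiM {..<m} (\<lambda>_. N))"
    and "(\<integral>x. Max (x ` {..<m}) - x 0 \<partial>PiM {..<m} (\<lambda>_. N)) \<le> (real m - 1) * (gini_mean_difference N / 2)"
    using m Max_gap_bounds[of "{..<m}" 0 1] by (auto simp: of_nat_diff)
qed

theorem proposition2p8:
  fixes P :: "'a measure" and X :: "'a \<Rightarrow> real" and m :: nat
  assumes "prob_space P"
    and "X \<in> borel_measurable P"
    and "AE \<omega> in P. X \<omega> \<ge> 0"
    and "integrable P X"
    and "(\<integral>\<omega>. X \<omega> \<partial>P) > 0"
    and "m \<ge> 2"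
  shows "\<exists>r s. r > 0 \<and> s > 0 \<and>
           IG_min m (distr P borel X) = gini (distr P borel (\<lambda>\<omega>. X \<omega> + r)) \<and>
           IG_max m (distr P borel X) = gini (distr P borel (\<lambda>\<omega>. X \<omega> + s))"
proof -
  define N where "N = distr P borel X"
  have [measurable]: "X \<in> borel_measurable P" by (rule assms(2))
  have N: "prob_space N" "sets N = sets borel" "integrable N (\<lambda>x. x)"
    unfolding N_def using assms(1,4) by (auto intro: prob_space.prob_space_distr simp: integrable_distr_eq)
  have mean: "0 < mean N"
    unfolding N_def mean_def using assms(5) by (simp add: integral_distr)
  have shift: "distr P borel (\<lambda>\<omega>. X \<omega> + c) = distr N borel (\<lambda>x. x + c)" for c
    unfolding N_def by (simp add: distr_distr comp_def)
  obtain r where "r > 0" "IG_min m N = gini (distr N borel (\<lambda>x. x + r))"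
    using exists_gini_shift_eq[OF N mean integral_gap_to_Min_bounds[OF N assms(6)]]
    unfolding IG_min_def by blast
  moreover obtain s where "s > 0" "IG_max m N = gini (distr N borel (\<lambda>x. x + s))"
    using exists_gini_shift_eq[OF N mean integral_gap_to_Max_bounds[OF N assms(6)]]
    unfolding IG_max_def by blast
  ultimately show ?thesis
    unfolding shift N_def[symmetric] by blast
qed

end
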